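(* Let $N\ge 1$, let $\mathbf{A}=(A_{ij})\in\mathbb{R}^{N\times N}$ with $A_{ij}\ge 0$ for $i\neq j$ and $A_{ii}=0$, let $D_i=\sum_{j=1}^N A_{ij}$, $\mathbf{D}=\operatorname{diag}(D_1,\dots,D_N)$, let $\beta_1,\dots,\beta_N>0$, and set $\mathbf{H}=\mathbf{A}-\mathbf{D}-\operatorname{diag}(\beta_1,\dots,\beta_N)$; assume $\mathbf{H}$ is diagonalizable. Let $m\in\{1,\dots,N\}$, $I_0>0$, $\mathbf{Q}=I_0\mathbf{e}_m\mathbf{e}_m^\top$, and let $\mathbf{P}_\infty=\int_0^\infty e^{\mathbf{H}s}\mathbf{Q}e^{\mathbf{H}^\top s}\,ds$ (the unique solution of $\mathbf{H}\mathbf{P}_\infty+\mathbf{P}_\infty\mathbf{H}^\top+\mathbf{Q}=0$). Let $i,j\in\{1,\dots,N\}$ be such that each of $i$ and $j$ is reachable from $m$, i.e. equals $m$ or is the endpoint of a directed walk $m=w_0,\dots,w_n$ with $A_{w_{t+1}w_t}>0$ for all $t$. Then for every $\tau\ge 0$, $C_{ij}(\tau):=[e^{\mathbf{H}\tau}\mathbf{P}_\infty]_{ij}>0$.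
   Context: $\mathbf{C}(\tau)$ is the stationary covariance function $\mathbb{E}[\mathbf{x}(t)\mathbf{x}(t-\tau)^\top]$ of the linear SDE $d\mathbf{x}=\mathbf{H}\mathbf{x}\,dt+d\boldsymbol{\beta}(t)$, where $\boldsymbol{\beta}$ is a Brownian motion with $\mathbb{E}[d\boldsymbol\beta\, d\boldsymbol\beta^\top]=\mathbf{Q}\,dt$ (white noise of spectral density $I_0$ injected only at node $m$); for $\tau\ge 0$ it equals $e^{\mathbf{H}\tau}\mathbf{P}_\infty$. Diagonal entries are autocovariances and off-diagonal entries crosscovariances. *)

theory Defs
  imports "HOL-Analysis.Analysis"
begin

primrec mpow :: "'a::comm_ring_1 ^'n^'n \<Rightarrow> nat \<Rightarrow> 'a^'n^'n" where
  "mpow M 0 = mat 1"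
| "mpow M (Suc k) = M ** mpow M k"

definition mexp :: "real^'n^'n \<Rightarrow> real \<Rightarrow> real^'n^'n" where
  "mexp H t = (\<Sum>k. (t ^ k / fact k) *\<^sub>R mpow H k)"

definition diag_mat :: "('n \<Rightarrow> real) \<Rightarrow> real^'n^'n" where
  "diag_mat d = (\<chi> i j. if i = j then d i else 0)"

definition diagonalizable :: "real^'n^'n \<Rightarrow> bool" where
  "diagonalizable H \<longleftrightarrow>
     (\<exists>S Sinv :: complex^'n^'n. S ** Sinv = mat 1 \<and> Sinv ** S = mat 1 \<and>
        (\<forall>i j. i \<noteq> j \<longrightarrow> (Sinv ** (\<chi> a b. complex_of_real (H $ a $ b)) ** S) $ i $ j = 0))"

definition reachable :: "real^'n^'n \<Rightarrow> 'n \<Rightarrow> 'n \<Rightarrow> bool" where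
  "reachable A m k \<longleftrightarrow> (\<lambda>u v. 0 < A $ v $ u)\<^sup>*\<^sup>* m k"

end

theory Submission
  imports Defs
begin

text \<open>
  H = A - D - diag beta is a Metzler matrix (nonnegative off the diagonal) whose row sums
  -beta_a are at most -min beta < 0. Adding cI makes it entrywise nonnegative, so by the power
  series exp(Hs) = exp(-cs) exp((H + cI)s) is entrywise nonnegative, has a positive diagonal,
  is positive at (v, m) whenever v is reachable from m, and its entries are at most exp(-s min beta).
  For Q = I0 e_m e_m^T the integrand defining P has entries I0 exp(Hs)_km exp(Hs)_jm, so P is
  entrywise nonnegative with P_ij > 0, and hence (exp(H tau) P)_ij >= exp(H tau)_ii P_ij > 0.
\<close>

section \<open>Matrix exponential series\<close>

lemma matrix_mul_sum_right:
  fixes X :: "'a::comm_semiring_1^'n^'m"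
  shows "X ** (\<Sum>i\<in>S. f i) = (\<Sum>i\<in>S. X ** f i)"
proof (induction S rule: infinite_finite_induct)
  case (insert x F) then show ?case by (simp add: matrix_add_ldistrib)
qed auto

lemma matrix_add_rdistrib: "((A::'a::comm_semiring_1^'n^'m) + B) ** C = A ** C + B ** C"
  by (vector matrix_matrix_mult_def sum.distrib[symmetric] field_simps)

lemma mpow_add_scalar:
  fixes M :: "real^'n^'n"
  shows "mpow (M + d *\<^sub>R mat 1) k = (\<Sum>i\<le>k. (real (k choose i) * d^(k-i)) *\<^sub>R mpow M i)"
proof (induction k)
  case 0 then show ?case by simp
next
  case (Suc k)
  define g where "g i = (real (k choose i) * d^(Suc k - i)) *\<^sub>R mpow M i" for i
  have "mpow (M + d *\<^sub>R mat 1) (Suc k) = M ** (\<Sum>i\<le>k. (real (k choose i) * d^(k-i)) *\<^sub>R mpow M i)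
        + d *\<^sub>R (\<Sum>i\<le>k. (real (k choose i) * d^(k-i)) *\<^sub>R mpow M i)"
    using Suc by (simp add: matrix_add_rdistrib scalar_matrix_assoc[symmetric])
  also have "M ** (\<Sum>i\<le>k. (real (k choose i) * d^(k-i)) *\<^sub>R mpow M i)
     = (\<Sum>i\<le>k. (real (k choose i) * d^(k-i)) *\<^sub>R mpow M (Suc i))"
    by (simp add: matrix_mul_sum_right matrix_scalar_ac scalar_matrix_assoc)
  also have "d *\<^sub>R (\<Sum>i\<le>k. (real (k choose i) * d^(k-i)) *\<^sub>R mpow M i) = g 0 + (\<Sum>i\<le>k. g (Suc i))"
  proof -
    have "d *\<^sub>R (\<Sum>i\<le>k. (real (k choose i) * d^(k-i)) *\<^sub>R mpow M i) = (\<Sum>i\<le>Suc k. g i)"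
      unfolding g_def scaleR_sum_right by (auto simp: Suc_diff_le mult_ac intro!: sum.cong)
    then show ?thesis by (simp only: sum.atMost_Suc_shift)
  qed
  finally have "mpow (M + d *\<^sub>R mat 1) (Suc k) =
      (\<Sum>i\<le>k. (real (k choose i) * d^(k-i)) *\<^sub>R mpow M (Suc i)) + (g 0 + (\<Sum>i\<le>k. g (Suc i)))" .
  moreover have "(\<Sum>i\<le>Suc k. (real (Suc k choose i) * d^(Suc k-i)) *\<^sub>R mpow M i)
     = g 0 + (\<Sum>i\<le>k. (real (Suc k choose Suc i) * d^(k-i)) *\<^sub>R mpow M (Suc i))"
    by (simp add: sum.atMost_Suc_shift g_def del: sum.atMost_Suc)
  moreover have "(\<Sum>i\<le>k. (real (Suc k choose Suc i) * d^(k-i)) *\<^sub>R mpow M (Suc i))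
    = (\<Sum>i\<le>k. (real (k choose i) * d^(k-i)) *\<^sub>R mpow M (Suc i)) + (\<Sum>i\<le>k. g (Suc i))"
    by (simp add: g_def sum.distrib[symmetric] algebra_simps)
  ultimately show ?case by simp
qed

lemma abs_mpow_nth_le:
  fixes X :: "real^'n^'n"
  shows "\<bar>mpow X k $a$b\<bar> \<le> (real CARD('n) * norm X)^k"
proof (induction k arbitrary: a b)
  case 0 then show ?case by (simp add: mat_def)
next
  case (Suc k)
  have X_nth: "\<bar>X$a$u\<bar> \<le> norm X" for u
    using Finite_Cartesian_Product.norm_nth_le[of "X$a" u] Finite_Cartesian_Product.norm_nth_le[of X a]
    by simp
  have "\<bar>mpow X (Suc k) $a$b\<bar> \<le> (\<Sum>u\<in>UNIV. \<bar>X$a$u\<bar> * \<bar>mpow X k $u$b\<bar>)"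
    by (simp add: matrix_matrix_mult_def sum_abs[THEN order_trans] abs_mult)
  also have "\<dots> \<le> (\<Sum>u\<in>(UNIV::'n set). norm X * (real CARD('n) * norm X)^k)"
    by (intro sum_mono mult_mono Suc X_nth) auto
  finally show ?case by simp
qed

lemma mexp_nth_summable:
  fixes X :: "real^'n^'n"
  shows "summable (\<lambda>k. norm ((t^k/fact k) * mpow X k $a$b))"
proof (rule summable_comparison_test'[OF summable_exp[of "\<bar>t\<bar> * (real CARD('n) * norm X)"]])
  fix k
  have "\<bar>(t^k/fact k) * mpow X k $a$b\<bar> = (\<bar>t\<bar>^k/fact k) * \<bar>mpow X k $a$b\<bar>"
    by (simp add: abs_mult power_abs)
  also have "\<dots> \<le> (\<bar>t\<bar>^k/fact k) * (real CARD('n) * norm X)^k"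
    by (intro mult_left_mono abs_mpow_nth_le) simp
  finally show "norm (norm ((t^k/fact k) * mpow X k $a$b))
      \<le> inverse (fact k) * (\<bar>t\<bar> * (real CARD('n) * norm X))^k"
    by (simp add: field_simps)
qed

lemma sums_matrix_iff_nth:
  fixes f :: "nat \<Rightarrow> real^'n^'m"
  shows "f sums (\<chi> a b. s a b) \<longleftrightarrow> (\<forall>a b. (\<lambda>k. f k $a$b) sums s a b)"
proof
  assume "f sums (\<chi> a b. s a b)"
  then show "\<forall>a b. (\<lambda>k. f k $a$b) sums s a b"
    using sums_vec_nth[OF sums_vec_nth] by fastforce
next
  assume "\<forall>a b. (\<lambda>k. f k $a$b) sums s a b"
  then show "f sums (\<chi> a b. s a b)"
    unfolding sums_def by (intro vec_tendstoI) simp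
qed

lemma mexp_nth_sums:
  fixes X :: "real^'n^'n"
  shows "(\<lambda>k. (t^k/fact k) * mpow X k $a$b) sums mexp X t $a$b"
proof -
  have "(\<lambda>k. (t^k/fact k) *\<^sub>R mpow X k) sums (\<chi> a b. \<Sum>k. (t^k/fact k) * mpow X k $a$b)"
    unfolding sums_matrix_iff_nth vector_scaleR_component real_scaleR_def
    by (blast intro: summable_norm_cancel mexp_nth_summable)
  then have "mexp X t = (\<chi> a b. \<Sum>k. (t^k/fact k) * mpow X k $a$b)"
    unfolding mexp_def by (rule sums_unique[symmetric])
  then show ?thesis
    by (simp only: vec_lambda_beta) (rule summable_sums[OF summable_norm_cancel[OF mexp_nth_summable]])
qed

lemma mexp_nth_continuous:
  fixes X :: "real^'n^'n"
  shows "continuous_on S (\<lambda>t. mexp X t $a$b)"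
proof (rule continuous_at_imp_continuous_on, rule ballI)
  fix x
  have "(\<lambda>k. (mpow X k $a$b / fact k) * t^k) sums mexp X t $a$b" for t
    using mexp_nth_sums[of t X a b] by (simp add: field_simps)
  then have eq: "(\<lambda>t. mexp X t $a$b) = (\<lambda>t. \<Sum>k. (mpow X k $a$b / fact k) * t^k)"
    by (simp add: sums_iff)
  have "summable (\<lambda>k. (mpow X k $a$b / fact k) * (\<bar>x\<bar> + 1)^k)"
    using summable_norm_cancel[OF mexp_nth_summable[of "\<bar>x\<bar> + 1" X a b]] by (simp add: field_simps)
  then show "isCont (\<lambda>t. mexp X t $a$b) x"
    unfolding eq by (rule isCont_powser) simp
qed

lemma mexp_add_scalar:
  fixes M :: "real^'n^'n"
  shows "mexp (M + d *\<^sub>R mat 1) t $a$b = exp (d*t) * mexp M t $a$b"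
proof -
  have "mexp M t $a$b * exp (d*t) =
     (\<Sum>k. \<Sum>i\<le>k. ((t^i/fact i) * mpow M i $a$b) * ((d*t)^(k-i) / fact (k-i)))"
  proof -
    have "exp (d*t) = (\<Sum>l. (d*t)^l / fact l)"
      unfolding exp_def by (simp add: divide_inverse mult.commute)
    moreover have "summable (\<lambda>l. norm ((d*t)^l / fact l))"
      using summable_norm_exp[of "d*t"] by (simp add: divide_inverse mult.commute)
    ultimately show ?thesis
      unfolding sums_unique[OF mexp_nth_sums] by (simp only: Cauchy_product[OF mexp_nth_summable])
  qed
  also have "\<dots> = (\<Sum>k. (t^k/fact k) * mpow (M + d *\<^sub>R mat 1) k $a$b)"
  proof (intro suminf_cong)
    fix k
    have "((t^i/fact i) * mpow M i $a$b) * ((d*t)^(k-i) / fact (k-i))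
           = (t^k/fact k) * ((real (k choose i) * d^(k-i)) * mpow M i $a$b)" if "i \<le> k" for i
    proof -
      have "t^k = t^i * t^(k-i)" using that by (simp flip: power_add)
      then show ?thesis
        unfolding binomial_fact[OF that] by (simp add: field_simps)
    qed
    then show "(\<Sum>i\<le>k. ((t^i/fact i) * mpow M i $a$b) * ((d*t)^(k-i) / fact (k-i)))
       = (t^k/fact k) * mpow (M + d *\<^sub>R mat 1) k $a$b"
      by (simp add: mpow_add_scalar sum_distrib_left)
  qed
  also have "\<dots> = mexp (M + d *\<^sub>R mat 1) t $a$b"
    by (rule sums_unique[OF mexp_nth_sums, symmetric])
  finally show ?thesis by (simp add: mult.commute)
qed

section \<open>Nonnegative matrices\<close>

lemma matrix_mul_pos_nth:
  fixes X Y :: "real^'n^'n"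
  assumes "\<And>a b. 0 \<le> X$a$b" "\<And>a b. 0 \<le> Y$a$b" "0 < X$i$k" "0 < Y$k$j"
  shows "0 < (X ** Y)$i$j"
proof -
  have "0 < X$i$k * Y$k$j"
    using assms(3,4) by simp
  also have "\<dots> \<le> (\<Sum>u\<in>UNIV. X$i$u * Y$u$j)"
    by (rule member_le_sum) (simp_all add: assms)
  finally show ?thesis
    by (simp add: matrix_matrix_mult_def)
qed

lemma mpow_nonneg:
  fixes M :: "real^'n^'n"
  assumes "\<And>a b. 0 \<le> M$a$b"
  shows "0 \<le> mpow M k $a$b"
  by (induction k arbitrary: a b) (simp_all add: mat_def matrix_matrix_mult_def assms sum_nonneg)

lemma mpow_row_sum_le:
  fixes M :: "real^'n^'n"
  assumes nonneg: "\<And>a b. 0 \<le> M$a$b" and row_sum: "\<And>a. (\<Sum>b\<in>UNIV. M$a$b) \<le> r"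
  shows "(\<Sum>b\<in>UNIV. mpow M k $a$b) \<le> r^k"
proof (induction k arbitrary: a)
  case 0 then show ?case by (simp add: mat_def)
next
  case (Suc k)
  have "0 \<le> r" using row_sum[of a] sum_nonneg[of UNIV "\<lambda>b. M$a$b"] nonneg by fastforce
  have "(\<Sum>b\<in>UNIV. mpow M (Suc k) $a$b) = (\<Sum>u\<in>UNIV. M$a$u * (\<Sum>b\<in>UNIV. mpow M k $u$b))"
    by (simp add: matrix_matrix_mult_def sum_distrib_left) (rule sum.swap)
  also have "\<dots> \<le> (\<Sum>u\<in>UNIV. M$a$u) * r^k"
    by (simp add: sum_distrib_right sum_mono mult_left_mono Suc nonneg)
  also have "\<dots> \<le> r * r^k" by (intro mult_right_mono row_sum) (simp add: \<open>0 \<le> r\<close>)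
  finally show ?case by simp
qed

lemma mpow_pos_if_reachable:
  fixes M :: "real^'n^'n"
  assumes nonneg: "\<And>a b. 0 \<le> M$a$b" and "reachable M m v"
  shows "\<exists>k. 0 < mpow M k $v$m"
  using \<open>reachable M m v\<close> unfolding reachable_def
proof (induction rule: rtranclp_induct)
  case base
  show ?case by (rule exI[of _ 0]) (simp add: mat_def)
next
  case (step u w)
  then obtain k where "0 < mpow M k $u$m" by blast
  then have "0 < (M ** mpow M k) $w$m"
    using step(2) by (intro matrix_mul_pos_nth[of M _ w u]) (simp_all add: nonneg mpow_nonneg)
  then show ?case by (metis mpow.simps(2))
qed

lemma mexp_nonneg:
  fixes M :: "real^'n^'n"
  assumes "\<And>a b. 0 \<le> M$a$b" "0 \<le> t"
  shows "0 \<le> mexp M t $a$b"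
  by (rule sums_le[OF _ sums_zero mexp_nth_sums]) (simp add: assms mpow_nonneg)

lemma mexp_pos_if_mpow_pos:
  fixes M :: "real^'n^'n"
  assumes "\<And>a b. 0 \<le> M$a$b" "0 \<le> t" and "0 < (t^k/fact k) * mpow M k $a$b"
  shows "0 < mexp M t $a$b"
proof -
  have "0 < (\<Sum>k. (t^k/fact k) * mpow M k $a$b)"
    using assms summable_norm_cancel[OF mexp_nth_summable]
    by (subst suminf_pos_iff) (auto simp: mpow_nonneg)
  then show ?thesis by (simp only: sums_unique[OF mexp_nth_sums])
qed

lemma mexp_nth_le_exp:
  fixes M :: "real^'n^'n"
  assumes nonneg: "\<And>a b. 0 \<le> M$a$b" and row_sum: "\<And>a. (\<Sum>b\<in>UNIV. M$a$b) \<le> r" and "0 \<le> t"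
  shows "mexp M t $a$b \<le> exp (r*t)"
proof -
  have term_le: "(\<Sum>b\<in>UNIV. (t^k/fact k) * mpow M k $a$b) \<le> (r*t)^k / fact k" for k
  proof -
    have "(\<Sum>b\<in>UNIV. (t^k/fact k) * mpow M k $a$b) = (t^k/fact k) * (\<Sum>b\<in>UNIV. mpow M k $a$b)"
      by (simp add: sum_distrib_left)
    also have "\<dots> \<le> (t^k/fact k) * r^k"
      by (intro mult_left_mono mpow_row_sum_le nonneg row_sum) (simp add: \<open>0 \<le> t\<close>)
    finally show ?thesis by (simp add: field_simps)
  qed
  have "mexp M t $a$b \<le> (\<Sum>b\<in>UNIV. mexp M t $a$b)"
    by (rule member_le_sum) (simp_all add: mexp_nonneg nonneg \<open>0 \<le> t\<close>)
  also have "\<dots> \<le> exp (r*t)"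
  proof (rule sums_le[OF term_le])
    show "(\<lambda>k. \<Sum>b\<in>UNIV. (t^k/fact k) * mpow M k $a$b) sums (\<Sum>b\<in>UNIV. mexp M t $a$b)"
      by (intro sums_sum mexp_nth_sums)
    show "(\<lambda>k. (r*t)^k / fact k) sums exp (r*t)"
      using exp_converges[of "r*t"] by (simp add: field_simps)
  qed
  finally show ?thesis .
qed

section \<open>Metzler matrices\<close>

definition metzler :: "real^'n^'n \<Rightarrow> bool" where
  "metzler H \<longleftrightarrow> (\<forall>a b. a \<noteq> b \<longrightarrow> 0 \<le> H$a$b)"

lemma reachable_cong_offdiag:
  assumes "\<And>a b. a \<noteq> b \<Longrightarrow> H$a$b = K$a$b" and "reachable H m v"
  shows "reachable K m v"
  using \<open>reachable H m v\<close> unfolding reachable_def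
proof (induction rule: rtranclp_induct)
  case (step u w)
  then show ?case
    by (cases "u = w") (simp_all add: assms(1) rtranclp.rtrancl_into_rtrancl)
qed simp

lemma metzler_shift:
  fixes H :: "real^'n^'n"
  assumes "metzler H"
  obtains c where "\<And>a b. 0 \<le> (H + c *\<^sub>R mat 1)$a$b"
    and "\<And>t a b. mexp H t $a$b = exp (-c*t) * mexp (H + c *\<^sub>R mat 1) t $a$b"
proof
  define c where "c = (\<Sum>a\<in>UNIV. \<bar>H$a$a\<bar>)"
  have diag: "- H$a$a \<le> c" for a
    unfolding c_def by (rule abs_le_D2, rule member_le_sum) simp_all
  show "0 \<le> (H + c *\<^sub>R mat 1)$a$b" for a b
    using assms diag[of a] by (cases "a = b") (simp_all add: metzler_def mat_def)
  show "mexp H t $a$b = exp (-c*t) * mexp (H + c *\<^sub>R mat 1) t $a$b" for t a b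
    using mexp_add_scalar[of "H + c *\<^sub>R mat 1" "-c" t a b] by simp
qed

lemma mexp_metzler_nonneg:
  assumes "metzler H" "0 \<le> t"
  shows "0 \<le> mexp H t $a$b"
  using assms(1) by (rule metzler_shift) (simp add: mexp_nonneg \<open>0 \<le> t\<close>)

lemma mexp_metzler_diag_pos:
  assumes "metzler H" "0 \<le> t"
  shows "0 < mexp H t $a$a"
  using assms(1) by (rule metzler_shift) (simp add: mexp_pos_if_mpow_pos[of _ t 0] mat_def \<open>0 \<le> t\<close>)

lemma mexp_metzler_pos_if_reachable:
  assumes "metzler H" "reachable H m v" "0 < t"
  shows "0 < mexp H t $v$m"
  using assms(1)
proof (rule metzler_shift)
  fix c
  assume nonneg: "\<And>a b. 0 \<le> (H + c *\<^sub>R mat 1)$a$b"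
    and shift: "\<And>t a b. mexp H t $a$b = exp (-c*t) * mexp (H + c *\<^sub>R mat 1) t $a$b"
  have "reachable (H + c *\<^sub>R mat 1) m v"
    by (rule reachable_cong_offdiag[OF _ assms(2)]) (simp add: mat_def)
  then obtain k where "0 < mpow (H + c *\<^sub>R mat 1) k $v$m"
    using mpow_pos_if_reachable nonneg by blast
  then have "0 < mexp (H + c *\<^sub>R mat 1) t $v$m"
    using \<open>0 < t\<close> by (intro mexp_pos_if_mpow_pos[OF nonneg, of t k]) simp_all
  then show ?thesis
    unfolding shift by simp
qed

lemma mexp_metzler_le_exp:
  assumes "metzler H" and row_sum: "\<And>a. (\<Sum>b\<in>UNIV. H$a$b) \<le> r" and "0 \<le> t"
  shows "mexp H t $a$b \<le> exp (r*t)"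
  using assms(1)
proof (rule metzler_shift)
  fix c
  assume nonneg: "\<And>a b. 0 \<le> (H + c *\<^sub>R mat 1)$a$b"
    and shift: "\<And>t a b. mexp H t $a$b = exp (-c*t) * mexp (H + c *\<^sub>R mat 1) t $a$b"
  have row_sum_shift: "(\<Sum>b\<in>UNIV. (H + c *\<^sub>R mat 1)$a$b) \<le> r + c" for a
    using row_sum[of a] by (simp add: sum.distrib mat_def of_bool_def[symmetric])
  have "mexp (H + c *\<^sub>R mat 1) t $a$b \<le> exp ((r + c) * t)"
    by (rule mexp_nth_le_exp[OF nonneg row_sum_shift \<open>0 \<le> t\<close>])
  then have "exp (-c*t) * mexp (H + c *\<^sub>R mat 1) t $a$b \<le> exp (-c*t) * exp ((r + c) * t)"
    by (rule mult_left_mono) simp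
  then show ?thesis
    unfolding shift by (simp add: algebra_simps flip: exp_add)
qed

section \<open>Stationary covariance\<close>

definition single_entry :: "'n \<Rightarrow> real \<Rightarrow> real^'n^'n" where
  "single_entry m c = (\<chi> a b. if a = m \<and> b = m then c else 0)"

definition stationary_covariance :: "real^'n^'n \<Rightarrow> real^'n^'n \<Rightarrow> real^'n^'n" where
  "stationary_covariance H Q = integral {0..} (\<lambda>s. mexp H s ** Q ** transpose (mexp H s))"

lemma matrix_mul_single_entry_transpose_nth:
  "(X ** single_entry m c ** transpose Y)$k$j = c * X$k$m * Y$j$m"
proof -
  have XQ: "(X ** single_entry m c)$k$u = (if u = m then c * X$k$m else 0)" for u
    by (simp add: single_entry_def matrix_matrix_mult_def if_distrib if_distribR sum.delta' cong: if_cong)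
  show ?thesis
    by (simp add: matrix_matrix_mult_def[of "X ** _"] transpose_def XQ if_distrib if_distribR sum.delta'
        cong: if_cong)
qed

lemma integrable_on_exp_decay:
  fixes f :: "real \<Rightarrow> 'a::euclidean_space"
  assumes "continuous_on {0..} f" "0 < b" "\<And>s. 0 \<le> s \<Longrightarrow> norm (f s) \<le> C * exp (- b * s)"
  shows "f integrable_on {0..}"
proof -
  have "(\<lambda>s. exp (- b * s)) integrable_on {0..}"
    using has_integral_exp_minus_to_infinity[OF \<open>0 < b\<close>, of 0] by (auto simp: integrable_on_def)
  then have "(\<lambda>s. C * exp (- b * s)) integrable_on {0..}"
    using integrable_on_cmult_left[of "\<lambda>s. exp (- b * s)" "{0..}" C] by simp
  then have "f absolutely_integrable_on {0..}"
    using assms by (intro measurable_bounded_by_integrable_imp_absolutely_integrable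
        continuous_imp_measurable_on_sets_lebesgue) auto
  then show ?thesis by (rule set_lebesgue_integral_eq_integral(1))
qed

lemma matrix_integral_nth:
  fixes F :: "'a::euclidean_space \<Rightarrow> real^'n^'m"
  assumes "\<And>a b. (\<lambda>s. F s $a$b) integrable_on S"
  shows "F integrable_on S" and "integral S F $a$b = integral S (\<lambda>s. F s $a$b)"
proof -
  show F: "F integrable_on S"
    by (rule integrable_componentwise) (auto simp: Basis_vec_def inner_axis assms)
  have row: "(\<lambda>s. F s $a) integrable_on S"
    using assms by (simp add: integrable_on_iff_component)
  have "integral S (\<lambda>s. F s $a$b) = integral S (\<lambda>s. F s $a) $b"
    by (rule integral_component_eq_cart[OF row])
  also have "\<dots> = integral S F $a$b"
    using integral_linear[OF F bounded_linear_vec_nth[of a]] by (simp only: o_def)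
  finally show "integral S F $a$b = integral S (\<lambda>s. F s $a$b)" ..
qed

lemma integral_pos_if_pos:
  fixes f :: "real \<Rightarrow> real"
  assumes "f integrable_on {0..}" "continuous_on {0..} f"
    and "\<And>s. 0 \<le> s \<Longrightarrow> 0 \<le> f s" "\<And>s. 0 < s \<Longrightarrow> 0 < f s"
  shows "0 < integral {0..} f"
proof -
  have "0 < integral {0..1} f"
    using integral_less_real[of 0 1 "\<lambda>_. 0" f] assms continuous_on_subset[OF assms(2)] by auto
  also have "\<dots> \<le> integral {0..} f"
    using assms by (intro integral_subset_le integrable_continuous_interval
        continuous_on_subset[OF assms(2)]) auto
  finally show ?thesis .
qed

context
  fixes H :: "real^'n^'n" and r :: real
  assumes metzler: "metzler H" and stable: "r < 0" "\<And>a. (\<Sum>b\<in>UNIV. H$a$b) \<le> r"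
begin

lemma covariance_integrand_continuous:
  "continuous_on S (\<lambda>s. mexp H s $k$m * mexp H s $j$m)"
  by (intro continuous_intros mexp_nth_continuous)

lemma covariance_integrand_integrable:
  "(\<lambda>s. mexp H s $k$m * mexp H s $j$m) integrable_on {0..}"
proof (rule integrable_on_exp_decay[OF covariance_integrand_continuous])
  show "norm (mexp H s $k$m * mexp H s $j$m) \<le> 1 * exp (- (-r) * s)" if "0 \<le> s" for s
  proof -
    have "exp (r * s) \<le> 1" using stable that by (simp add: mult_nonpos_nonneg)
    then have "mexp H s $j$m \<le> 1"
      using mexp_metzler_le_exp[OF metzler stable(2) that] by (rule order_trans[rotated])
    then have "mexp H s $k$m * mexp H s $j$m \<le> exp (r * s) * 1"
      by (intro mult_mono mexp_metzler_le_exp[OF metzler stable(2) that]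
          mexp_metzler_nonneg[OF metzler that]) simp_all
    then show ?thesis
      by (simp add: abs_mult mexp_metzler_nonneg[OF metzler that])
  qed
qed (use stable in simp)

lemma stationary_covariance_single_entry_nth:
  "stationary_covariance H (single_entry m c) $k$j
    = c * integral {0..} (\<lambda>s. mexp H s $k$m * mexp H s $j$m)"
proof -
  have "(\<lambda>s. (mexp H s ** single_entry m c ** transpose (mexp H s))$a$b) integrable_on {0..}" for a b
    unfolding matrix_mul_single_entry_transpose_nth mult.assoc
    using integrable_on_cmult_left[OF covariance_integrand_integrable, where c = c] by simp
  then show ?thesis
    unfolding stationary_covariance_def
    by (simp add: matrix_integral_nth(2) matrix_mul_single_entry_transpose_nth mult.assoc)
qed

lemma stationary_covariance_nonneg:
  "0 \<le> c \<Longrightarrow> 0 \<le> stationary_covariance H (single_entry m c) $k$j"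
  unfolding stationary_covariance_single_entry_nth
  by (intro mult_nonneg_nonneg integral_nonneg covariance_integrand_integrable)
    (simp_all add: mexp_metzler_nonneg[OF metzler])

lemma stationary_covariance_pos:
  assumes "0 < c" "reachable H m k" "reachable H m j"
  shows "0 < stationary_covariance H (single_entry m c) $k$j"
  unfolding stationary_covariance_single_entry_nth
  using assms
  by (intro mult_pos_pos integral_pos_if_pos covariance_integrand_integrable
      covariance_integrand_continuous)
    (simp_all add: mexp_metzler_nonneg[OF metzler] mexp_metzler_pos_if_reachable[OF metzler])

lemma mexp_mult_stationary_covariance_pos:
  assumes "0 < c" "reachable H m k" "reachable H m j" "0 \<le> \<tau>"
  shows "0 < (mexp H \<tau> ** stationary_covariance H (single_entry m c))$k$j"
  using assms
  by (intro matrix_mul_pos_nth[of _ _ k k] mexp_metzler_nonneg[OF metzler]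
      stationary_covariance_nonneg mexp_metzler_diag_pos[OF metzler] stationary_covariance_pos) simp_all

end

theorem lemma4:
  fixes A :: "real^'n^'n" and \<beta> :: "'n \<Rightarrow> real" and I0 :: real
    and m i j :: 'n and \<tau> :: real
  assumes A_offdiag: "\<forall>a b. a \<noteq> b \<longrightarrow> 0 \<le> A $ a $ b"
    and A_diag: "\<forall>a. A $ a $ a = 0"
    and beta_pos: "\<forall>a. 0 < \<beta> a"
    and H_diag: "diagonalizable (A - diag_mat (\<lambda>a. \<Sum>b\<in>UNIV. A $ a $ b) - diag_mat \<beta>)"
    and I0_pos: "0 < I0"
    and reach_i: "reachable A m i"
    and reach_j: "reachable A m j"
    and tau: "0 \<le> \<tau>"
  shows "let H = A - diag_mat (\<lambda>a. \<Sum>b\<in>UNIV. A $ a $ b) - diag_mat \<beta>;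
             Q = (\<chi> a b. if a = m \<and> b = m then I0 else 0) :: real^'n^'n;
             P = integral {0..} (\<lambda>s. mexp H s ** Q ** transpose (mexp H s))
         in 0 < (mexp H \<tau> ** P) $ i $ j"
proof -
  define H where "H = A - diag_mat (\<lambda>a. \<Sum>b\<in>UNIV. A $ a $ b) - diag_mat \<beta>"
  have offdiag: "H$a$b = A$a$b" if "a \<noteq> b" for a b
    using that by (simp add: H_def diag_mat_def)
  have "metzler H"
    using A_offdiag by (simp add: metzler_def offdiag)
  moreover have "(\<Sum>b\<in>UNIV. H$a$b) \<le> - Min (range \<beta>)" for a
    by (simp add: H_def diag_mat_def sum_subtractf of_bool_def[symmetric])
  moreover have "- Min (range \<beta>) < 0"
    using beta_pos by (simp add: Min_gr_iff)
  moreover have "reachable H m i" "reachable H m j"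
    using reach_i reach_j by (auto intro: reachable_cong_offdiag offdiag[symmetric])
  ultimately have "0 < (mexp H \<tau> ** stationary_covariance H (single_entry m I0))$i$j"
    using I0_pos tau by (intro mexp_mult_stationary_covariance_pos[of H "- Min (range \<beta>)"])
  then show ?thesis
    by (simp add: Let_def H_def stationary_covariance_def single_entry_def)
qed

end
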